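(* Let $f_i:\mathbb{R}^d\to\mathbb{R}$, $i\in[n]$, be differentiable and $L$-smooth, $f=\frac1n\sum_i f_i$, and $f_*:=\inf f$. Let $\boldsymbol{W}=(w_{ir})$ be nonnegative and doubly stochastic. Consider any realization of the iterates of GT-NSGDm (described in the context) with step size $\alpha>0$ and any $\beta\in[0,1)$, and let $\bar{\boldsymbol{x}}^t=\frac1n\sum_i\boldsymbol{x}_i^t$, $\bar{\boldsymbol{y}}^t=\frac1n\sum_i\boldsymbol{y}_i^t$, and $\boldsymbol{\epsilon}^t=\bar{\boldsymbol{y}}^t-\nabla f(\bar{\boldsymbol{x}}^t)$. Then for every $T\ge1$, $$\sum_{t=0}^{T-1}\alpha\|\nabla f(\bar{\boldsymbol{x}}^t)\|\le f(\bar{\boldsymbol{x}}^0)-f_*+\sum_{t=0}^{T-1}2\alpha\|\boldsymbol{\epsilon}^t\|+\sum_{t=0}^{T-1}\frac{\alpha}{n}\sum_{i=1}^n\|\bar{\boldsymbol{y}}^t-\boldsymbol{y}_i^t\|+\sum_{t=0}^{T-1}\frac{L}{2}\alpha^2.$$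
   Context: Algorithm GT-NSGDm (run in parallel at every node $i$): initialize $\boldsymbol{x}_i^{-1}=\boldsymbol{x}_i^0=\bar{\boldsymbol{x}}^0$ (a common point) and $\boldsymbol{v}_i^{-1}=\boldsymbol{y}_i^{-1}=\mathbf{0}_d$. For $t=0,\dots,T-1$: sample $\boldsymbol{\xi}_i^t$; set $\boldsymbol{v}_i^t=\beta\boldsymbol{v}_i^{t-1}+(1-\beta)\boldsymbol{g}_i(\boldsymbol{x}_i^t,\boldsymbol{\xi}_i^t)$; $\boldsymbol{y}_i^t=\sum_{r=1}^n w_{ir}(\boldsymbol{y}_r^{t-1}+\boldsymbol{v}_r^t-\boldsymbol{v}_r^{t-1})$; $\boldsymbol{x}_i^{t+1}=\sum_{r=1}^n w_{ir}\big(\boldsymbol{x}_r^t-\alpha\,\boldsymbol{y}_r^t/\|\boldsymbol{y}_r^t\|\big)$, where $\boldsymbol{g}_i(\boldsymbol{x},\boldsymbol{\xi})$ is node $i$'s stochastic gradient. *)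

theory Defs
  imports "HOL-Analysis.Analysis"
begin

definition avg :: "nat \<Rightarrow> (nat \<Rightarrow> 'a::real_normed_vector) \<Rightarrow> 'a" where
  "avg n u = (1 / real n) *\<^sub>R (\<Sum>i<n. u i)"

definition doubly_stochastic :: "nat \<Rightarrow> (nat \<Rightarrow> nat \<Rightarrow> real) \<Rightarrow> bool" where
  "doubly_stochastic n W \<longleftrightarrow>
     (\<forall>i<n. \<forall>r<n. 0 \<le> W i r) \<and>
     (\<forall>i<n. (\<Sum>r<n. W i r) = 1) \<and>
     (\<forall>r<n. (\<Sum>i<n. W i r) = 1)"

definition L_smooth :: "real \<Rightarrow> ('a::real_inner \<Rightarrow> real) \<Rightarrow> ('a \<Rightarrow> 'a) \<Rightarrow> bool" where
  "L_smooth L f gf \<longleftrightarrow>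
     (\<forall>x. (f has_derivative (\<lambda>h. gf x \<bullet> h)) (at x)) \<and>
     (\<forall>x y. norm (gf x - gf y) \<le> L * norm (x - y))"

end

theory Submission
  imports Defs
begin

(* Since W is doubly stochastic, xbar moves by
   -alpha d, where d is the average of the unit vectors sgn y_i (the normalization y / |y| is
   sgn y, also at y = 0). The descent lemma for the L-smooth f gives
   f(xbar') <= f(xbar) - alpha grad f(xbar) . d + L alpha^2 / 2, and splitting
   grad f(xbar) = y_i + (ybar - y_i) - eps bounds grad f(xbar) . d from below by
   |grad f(xbar)| - 2 |eps| - avg_i |ybar - y_i|. Telescoping with f >= f_* concludes.
   Neither the momentum nor the tracking recursion enters: the bound holds for any y. *)

lemma L_smooth_descent:
  assumes "L_smooth L f G"
  shows "f b \<le> f a + G a \<bullet> (b - a) + L / 2 * (norm (b - a))\<^sup>2"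
proof -
  have D: "\<And>x. (f has_derivative (\<lambda>h. G x \<bullet> h)) (at x)"
    and Lip: "\<And>x y. norm (G x - G y) \<le> L * norm (x - y)"
    using assms by (auto simp: L_smooth_def)
  define d where "d = b - a"
  define \<phi> where "\<phi> s = f (a + s *\<^sub>R d) - s * (G a \<bullet> d) - L / 2 * s\<^sup>2 * (norm d)\<^sup>2" for s
  have "\<phi> 1 \<le> \<phi> 0"
  proof (rule DERIV_nonpos_imp_nonincreasing[of 0 1])
    fix s :: real assume s: "0 \<le> s" "s \<le> 1"
    have "((\<lambda>s. a + s *\<^sub>R d) has_derivative (\<lambda>h. h *\<^sub>R d)) (at s)"
      by (auto intro!: derivative_eq_intros)
    from has_derivative_compose[OF this D]
    have line: "((\<lambda>s. f (a + s *\<^sub>R d)) has_field_derivative (G (a + s *\<^sub>R d) \<bullet> d)) (at s)"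
      by (simp add: has_field_derivative_def mult.commute[of _ "G (a + s *\<^sub>R d) \<bullet> d"])
    have "(\<phi> has_field_derivative (G (a + s *\<^sub>R d) \<bullet> d - G a \<bullet> d - L / 2 * (2 * s) * (norm d)\<^sup>2)) (at s)"
      unfolding \<phi>_def[abs_def] by (rule derivative_eq_intros line | simp)+
    moreover have "(G (a + s *\<^sub>R d) - G a) \<bullet> d \<le> L * norm (s *\<^sub>R d) * norm d"
      using norm_cauchy_schwarz[of "G (a + s *\<^sub>R d) - G a" d] Lip[of "a + s *\<^sub>R d" a]
      by (smt (verit) mult_right_mono norm_ge_zero add_diff_cancel_left')
    ultimately show "\<exists>y. (\<phi> has_real_derivative y) (at s) \<and> y \<le> 0"
      using s by (auto simp: inner_diff_left power2_eq_square)
  qed simp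
  then show ?thesis unfolding \<phi>_def d_def by simp
qed

lemma L_smooth_nonneg:
  fixes f :: "'a::euclidean_space \<Rightarrow> real"
  assumes "L_smooth L f G"
  shows "0 \<le> L"
proof -
  obtain e :: 'a where "e \<in> Basis" using nonempty_Basis by blast
  moreover have "0 \<le> L * norm (e - 0)"
    using assms norm_ge_zero order_trans unfolding L_smooth_def by blast
  ultimately show ?thesis by (simp add: zero_le_mult_iff)
qed

lemma norm_avg_le: "norm (avg n u) \<le> (1 / real n) * (\<Sum>i<n. norm (u i))"
  by (simp add: avg_def norm_sum divide_right_mono)

lemma avg_diff: "avg n u - avg n w = avg n (\<lambda>i. u i - w i)"
  by (simp add: avg_def sum_subtractf scaleR_diff_right)

lemma L_smooth_avg:
  assumes "n \<ge> 1" and "\<And>i. i < n \<Longrightarrow> L_smooth L (fs i) (gfs i)"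
  shows "L_smooth L (\<lambda>z. (1 / real n) * (\<Sum>i<n. fs i z)) (\<lambda>z. avg n (\<lambda>i. gfs i z))"
  unfolding L_smooth_def
proof safe
  fix z
  have "((\<lambda>z. (1 / real n) * (\<Sum>i<n. fs i z)) has_derivative
         (\<lambda>h. (1 / real n) * (\<Sum>i<n. gfs i z \<bullet> h))) (at z)"
    by (intro has_derivative_mult_right has_derivative_sum) (use assms in \<open>auto simp: L_smooth_def\<close>)
  then show "((\<lambda>z. (1 / real n) * (\<Sum>i<n. fs i z)) has_derivative (\<lambda>h. avg n (\<lambda>i. gfs i z) \<bullet> h)) (at z)"
    by (simp add: avg_def inner_sum_left)
next
  fix p q
  have "norm (avg n (\<lambda>i. gfs i p) - avg n (\<lambda>i. gfs i q)) \<le> (1 / real n) * (\<Sum>i<n. norm (gfs i p - gfs i q))"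
    unfolding avg_diff by (rule norm_avg_le)
  also have "\<dots> \<le> (1 / real n) * (\<Sum>i<n. L * norm (p - q))"
    by (intro mult_left_mono sum_mono) (use assms(2) in \<open>auto simp: L_smooth_def\<close>)
  also have "\<dots> = L * norm (p - q)"
    using assms(1) by simp
  finally show "norm (avg n (\<lambda>i. gfs i p) - avg n (\<lambda>i. gfs i q)) \<le> L * norm (p - q)" .
qed

lemma avg_mix_doubly_stochastic:
  assumes "doubly_stochastic n W"
  shows "avg n (\<lambda>i. \<Sum>r<n. W i r *\<^sub>R u r) = avg n u"
proof -
  have "(\<Sum>i<n. \<Sum>r<n. W i r *\<^sub>R u r) = (\<Sum>r<n. (\<Sum>i<n. W i r) *\<^sub>R u r)"
    by (subst sum.swap) (simp add: scaleR_sum_left)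
  also have "\<dots> = (\<Sum>r<n. u r)"
    using assms by (simp add: doubly_stochastic_def)
  finally show ?thesis by (simp add: avg_def)
qed

lemma norm_avg_sgn_le: "norm (avg n (\<lambda>i. sgn (u i))) \<le> 1"
proof -
  have "norm (avg n (\<lambda>i. sgn (u i))) \<le> (1 / real n) * (\<Sum>i<n. 1)"
    by (rule order_trans[OF norm_avg_le]) (intro mult_left_mono sum_mono; simp add: norm_sgn)
  then show ?thesis by (cases "n = 0") auto
qed

lemma inner_avg_sgn_ge:
  fixes u :: "nat \<Rightarrow> 'a::real_inner"
  assumes "n \<ge> 1"
  shows "g \<bullet> avg n (\<lambda>i. sgn (u i))
           \<ge> norm g - 2 * norm (avg n u - g) - (1 / real n) * (\<Sum>i<n. norm (avg n u - u i))"
proof -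
  define e where "e = avg n u - g"
  have each: "g \<bullet> sgn (u i) \<ge> norm (u i) - norm (avg n u - u i) - norm e" for i
  proof -
    have "g = u i + (avg n u - u i) - e" by (simp add: e_def)
    moreover have "u i \<bullet> sgn (u i) = norm (u i)"
      by (cases "u i = 0") (simp_all add: sgn_div_norm dot_square_norm power2_eq_square)
    moreover have "\<bar>w \<bullet> sgn (u i)\<bar> \<le> norm w" for w
      using Cauchy_Schwarz_ineq2[of w "sgn (u i)"] norm_sgn[of "u i"]
      by (smt (verit) mult_left_le norm_ge_zero)
    ultimately show ?thesis
      by (smt (verit) inner_add_left inner_diff_left abs_le_iff)
  qed
  have "g \<bullet> avg n (\<lambda>i. sgn (u i)) = (1 / real n) * (\<Sum>i<n. g \<bullet> sgn (u i))"
    by (simp add: avg_def inner_sum_right)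
  also have "\<dots> \<ge> (1 / real n) * (\<Sum>i<n. norm (u i) - norm (avg n u - u i) - norm e)"
    by (intro mult_left_mono sum_mono each) auto
  finally have "g \<bullet> avg n (\<lambda>i. sgn (u i)) \<ge> (1 / real n) * (\<Sum>i<n. norm (u i))
      - (1 / real n) * (\<Sum>i<n. norm (avg n u - u i)) - norm e"
    using assms by (simp add: sum_subtractf right_diff_distrib)
  moreover have "norm g \<le> norm (avg n u) + norm e"
    using norm_triangle_ineq4[of "avg n u" e] by (simp add: e_def)
  ultimately show ?thesis
    using norm_avg_le[of n u] by (simp add: e_def)
qed

lemma L_smooth_step_descent:
  assumes "L_smooth L f G" "0 \<le> L" "0 \<le> \<alpha>" "norm d \<le> 1"
  shows "\<alpha> * (G x \<bullet> d) \<le> f x - f (x - \<alpha> *\<^sub>R d) + L / 2 * \<alpha>\<^sup>2"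
proof -
  have "(norm d)\<^sup>2 \<le> 1"
    using assms(4) by (simp add: power_le_one)
  then have "(norm (\<alpha> *\<^sub>R d))\<^sup>2 \<le> \<alpha>\<^sup>2"
    using assms(3) by (simp add: power_mult_distrib mult_left_le)
  with assms(2) have "L / 2 * (norm (\<alpha> *\<^sub>R d))\<^sup>2 \<le> L / 2 * \<alpha>\<^sup>2"
    by (intro mult_left_mono) auto
  with L_smooth_descent[OF assms(1), of "x - \<alpha> *\<^sub>R d" x] show ?thesis
    by (simp add: inner_diff_right)
qed

lemma sum_le_telescope:
  fixes a b f :: "nat \<Rightarrow> real"
  assumes "\<And>t. a t \<le> f t - f (Suc t) + b t"
  shows "(\<Sum>t<T. a t) \<le> f 0 - f T + (\<Sum>t<T. b t)"
proof -
  have "(\<Sum>t<T. a t) \<le> (\<Sum>t<T. f t - f (Suc t) + b t)"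
    by (intro sum_mono assms)
  also have "\<dots> = f 0 - f T + (\<Sum>t<T. b t)"
    by (simp only: sum.distrib sum_lessThan_telescope')
  finally show ?thesis .
qed

lemma ereal_le_minus_INF:
  assumes "a \<le> f x - f z + s"
  shows "ereal a \<le> ereal (f x) - (INF z. ereal (f z)) + ereal s"
proof -
  have "(INF z. ereal (f z)) \<le> ereal (f z)"
    by (rule INF_lower) simp
  with assms show ?thesis
    by (cases "INF z. ereal (f z)") auto
qed

theorem lemma3:
  fixes n :: nat and L \<alpha> \<beta> :: real
    and fs :: "nat \<Rightarrow> 'a::euclidean_space \<Rightarrow> real"
    and gfs :: "nat \<Rightarrow> 'a \<Rightarrow> 'a"
    and W :: "nat \<Rightarrow> nat \<Rightarrow> real"
    and g :: "nat \<Rightarrow> 'a \<Rightarrow> 's \<Rightarrow> 'a"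
    and \<xi> :: "nat \<Rightarrow> nat \<Rightarrow> 's"
    and x v y :: "nat \<Rightarrow> nat \<Rightarrow> 'a"
    and x0 :: 'a and T :: nat
  assumes n_pos: "n \<ge> 1"
    and smooth: "\<And>i. i < n \<Longrightarrow> L_smooth L (fs i) (gfs i)"
    and W_ds: "doubly_stochastic n W"
    and alpha_pos: "\<alpha> > 0"
    and beta: "0 \<le> \<beta>" "\<beta> < 1"
    and x_init: "\<And>i. i < n \<Longrightarrow> x 0 i = x0"
    and v_init: "\<And>i. i < n \<Longrightarrow> v 0 i = (1 - \<beta>) *\<^sub>R g i (x 0 i) (\<xi> 0 i)"
    and y_init: "\<And>i. i < n \<Longrightarrow> y 0 i = (\<Sum>r<n. W i r *\<^sub>R v 0 r)"
    and v_step: "\<And>t i. i < n \<Longrightarrow>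
        v (Suc t) i = \<beta> *\<^sub>R v t i + (1 - \<beta>) *\<^sub>R g i (x (Suc t) i) (\<xi> (Suc t) i)"
    and y_step: "\<And>t i. i < n \<Longrightarrow>
        y (Suc t) i = (\<Sum>r<n. W i r *\<^sub>R (y t r + v (Suc t) r - v t r))"
    and x_step: "\<And>t i. i < n \<Longrightarrow>
        x (Suc t) i = (\<Sum>r<n. W i r *\<^sub>R (x t r - \<alpha> *\<^sub>R ((1 / norm (y t r)) *\<^sub>R y t r)))"
    and T_pos: "T \<ge> 1"
  shows
    "(let f = (\<lambda>z. (1 / real n) * (\<Sum>i<n. fs i z));
          gradf = (\<lambda>z. avg n (\<lambda>i. gfs i z));
          xbar = (\<lambda>t. avg n (x t));
          ybar = (\<lambda>t. avg n (y t));
          eps = (\<lambda>t. ybar t - gradf (xbar t));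
          fstar = (INF z. ereal (f z))
      in ereal (\<Sum>t<T. \<alpha> * norm (gradf (xbar t)))
         \<le> ereal (f (xbar 0)) - fstar
           + ereal ((\<Sum>t<T. 2 * \<alpha> * norm (eps t))
                  + (\<Sum>t<T. (\<alpha> / real n) * (\<Sum>i<n. norm (ybar t - y t i)))
                  + (\<Sum>t<T. L / 2 * \<alpha>\<^sup>2)))"
proof -
  define F where "F = (\<lambda>z. (1 / real n) * (\<Sum>i<n. fs i z))"
  define G where "G = (\<lambda>z. avg n (\<lambda>i. gfs i z))"
  define xbar where "xbar = (\<lambda>t. avg n (x t))"
  define ybar where "ybar = (\<lambda>t. avg n (y t))"
  define b where "b t = 2 * \<alpha> * norm (ybar t - G (xbar t))
    + (\<alpha> / real n) * (\<Sum>i<n. norm (ybar t - y t i)) + L / 2 * \<alpha>\<^sup>2" for t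
  have F_smooth: "L_smooth L F G"
    unfolding F_def G_def by (rule L_smooth_avg[OF n_pos smooth])
  have xbar_step: "xbar (Suc t) = xbar t - \<alpha> *\<^sub>R avg n (\<lambda>i. sgn (y t i))" for t
  proof -
    have "xbar (Suc t) = avg n (\<lambda>i. \<Sum>r<n. W i r *\<^sub>R (x t r - \<alpha> *\<^sub>R sgn (y t r)))"
      by (simp add: xbar_def avg_def x_step sgn_div_norm divide_inverse)
    also have "\<dots> = avg n (\<lambda>r. x t r - \<alpha> *\<^sub>R sgn (y t r))"
      by (rule avg_mix_doubly_stochastic[OF W_ds])
    also have "\<dots> = xbar t - \<alpha> *\<^sub>R avg n (\<lambda>i. sgn (y t i))"
      by (simp add: xbar_def avg_def sum_subtractf scaleR_diff_right scaleR_sum_right)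
    finally show ?thesis .
  qed
  have "\<alpha> * norm (G (xbar t)) \<le> F (xbar t) - F (xbar (Suc t)) + b t" for t
  proof -
    have "\<alpha> * (norm (G (xbar t)) - 2 * norm (ybar t - G (xbar t))
            - (1 / real n) * (\<Sum>i<n. norm (ybar t - y t i)))
          \<le> \<alpha> * (G (xbar t) \<bullet> avg n (\<lambda>i. sgn (y t i)))"
      using inner_avg_sgn_ge[OF n_pos, of "G (xbar t)" "y t"] alpha_pos
      by (simp add: ybar_def)
    also have "\<dots> \<le> F (xbar t) - F (xbar (Suc t)) + L / 2 * \<alpha>\<^sup>2"
      unfolding xbar_step
      by (rule L_smooth_step_descent[OF F_smooth L_smooth_nonneg[OF F_smooth]])
        (use alpha_pos norm_avg_sgn_le in auto)
    finally show ?thesis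
      by (simp add: b_def algebra_simps)
  qed
  then have "(\<Sum>t<T. \<alpha> * norm (G (xbar t))) \<le> F (xbar 0) - F (xbar T) + (\<Sum>t<T. b t)"
    by (rule sum_le_telescope)
  then have "ereal (\<Sum>t<T. \<alpha> * norm (G (xbar t)))
      \<le> ereal (F (xbar 0)) - (INF z. ereal (F z)) + ereal (\<Sum>t<T. b t)"
    by (rule ereal_le_minus_INF)
  then show ?thesis
    by (simp only: Let_def F_def G_def xbar_def ybar_def b_def sum.distrib)
qed

end
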